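(* Let $0\le c<\sqrt2-1$, let $K\ge1$ be an integer, let $t$ be a positive integer such that $R=(1+c)t$ is an integer with $R\ge10$, and let $L=R^{2K+1}$. For $l\in[K]$ with $cR^{K-l}$ an integer, define \[g_l=\big(1_{R^{K+1+l},R^{K-l}}\,2_{R^{K+1+l},R^{K-l}}\big)^{L/R^{K+1+l}}.\] Let $1\le i<j\le K$ with $cR^{K-i}$ and $cR^{K-j}$ integers, and let $s$ be a common subsequence of $g_i$ and $g_j$. Then \[\left(1+\frac2R\right)\operatorname{span}_{g_i}s+\operatorname{span}_{g_j}s\ \ge\ (3+c)\operatorname{len} s-\frac{10L}{R}.\]
   Context: Words are over $\{1,2\}$; $\alpha^m$ is letter $\alpha$ repeated $m$ times and $u^m$ is $m$ concatenated copies of word $u$. For positive integers $M,a$ with $ca$ and $M/((1+c)a)$ integers, $1_{M,a}=(1^a2^{ca})^{M/((1+c)a)}$ and $2_{M,a}=(2^a1^{ca})^{M/((1+c)a)}$. (The paper adopts the convention that all such lengths are integers.) Symbols are distinguishable positions; a common subsequence of $u_1,u_2$ is a pair of subsequences of $u_1,u_2$ equal as words, $\operatorname{len} s$ its length; $\operatorname{span}_{u}s$ is the length of the shortest block of consecutive symbols of $u$ containing the part of $s$ lying in $u$. *)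

theory Defs
  imports Complex_Main
begin

text \<open>Words over the alphabet {1,2} are lists of naturals.
  blk1 M a b = (1^a 2^b)^(M div (a+b)), i.e. 1_{M,a} with b = c*a;
  blk2 M a b = (2^a 1^b)^(M div (a+b)), i.e. 2_{M,a}.\<close>

definition blk1 :: "nat \<Rightarrow> nat \<Rightarrow> nat \<Rightarrow> nat list" where
  "blk1 M a b = concat (replicate (M div (a + b)) (replicate a 1 @ replicate b 2))"

definition blk2 :: "nat \<Rightarrow> nat \<Rightarrow> nat \<Rightarrow> nat list" where
  "blk2 M a b = concat (replicate (M div (a + b)) (replicate a 2 @ replicate b 1))"

text \<open>g_l = (1_{R^(K+1+l),R^(K-l)} 2_{R^(K+1+l),R^(K-l)})^(L / R^(K+1+l)), L = R^(2K+1);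
  the integer c*R^(K-l) is passed as nat (floor).\<close>

definition gword :: "real \<Rightarrow> nat \<Rightarrow> nat \<Rightarrow> nat \<Rightarrow> nat list" where
  "gword c R K l =
     (let M = R ^ (K + 1 + l); a = R ^ (K - l); b = nat \<lfloor>c * real a\<rfloor>
      in concat (replicate (R ^ (2 * K + 1) div M) (blk1 M a b @ blk2 M a b)))"

text \<open>A common subsequence of u1, u2: a pair of strictly increasing position lists
  (positions in u1, positions in u2) of equal length, reading the same word.\<close>

definition common_subseq :: "nat list \<Rightarrow> nat list \<Rightarrow> nat list \<times> nat list \<Rightarrow> bool" where
  "common_subseq u1 u2 s \<longleftrightarrow>
     (let is = fst s; js = snd s in
       sorted_wrt (<) is \<and> sorted_wrt (<) js \<and> length is = length js \<and>
       (\<forall>p\<in>set is. p < length u1) \<and> (\<forall>q\<in>set js. q < length u2) \<and>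
       map (\<lambda>p. u1 ! p) is = map (\<lambda>q. u2 ! q) js)"

definition cs_len :: "nat list \<times> nat list \<Rightarrow> nat" where
  "cs_len s = length (fst s)"

definition span_pos :: "nat list \<Rightarrow> nat" where
  "span_pos ps = (if ps = [] then 0 else last ps - hd ps + 1)"

end

theory Submission
  imports Defs
begin

text \<open>Each matched pair (p, q) of positions in g_i and g_j gets weight 3 + c, split between the
  two words as 2 + (1 + c) when q lies in a run of length a_j = R^(K-j) of g_j, and as 0 + (3 + c)
  when q lies in a run of length c a_j. Along any stretch of pairs of constant type, counting
  residues modulo a_j + c a_j bounds the g_j-weight by the span plus a_j (for short runs this is
  where c (3 + c) \<le> 1 + c, i.e. c < sqrt 2 - 1, enters). Along any stretch where q stays in one
  block of length M_j = R^(K+1+j) of g_j, the long-run pairs all read the same letter; since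
  g_i flips its letters under a shift by M_i = R^(K+1+i), at most (span + M_i) / 2 positions of g_i
  carry that letter, so the g_i-weight is at most the span plus M_i. The number of stretches is bounded by the
  number of runs of g_i and blocks of g_j, so the total error is O(L / R).\<close>

lemma length_concat_replicate: "length (concat (replicate n xs)) = n * length xs"
  by (simp add: length_concat sum_list_replicate)

lemma nth_concat_replicate:
  "p < n * length xs \<Longrightarrow> concat (replicate n xs) ! p = xs ! (p mod length xs)"
proof (induction n arbitrary: p)
  case (Suc n)
  show ?case
  proof (cases "p < length xs")
    case False
    then have "concat (replicate (Suc n) xs) ! p = concat (replicate n xs) ! (p - length xs)"
      by (simp add: nth_append length_concat_replicate)
    also have "\<dots> = xs ! (p mod length xs)"
      using Suc False by (simp add: le_mod_geq)
    finally show ?thesis .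
  qed (simp add: nth_append)
qed simp

lemma mod_double_less_iff_even_div:
  fixes M p :: nat
  assumes "0 < M"
  shows "p mod (2 * M) < M \<longleftrightarrow> even (p div M)"
proof -
  have "p mod (2 * M) = M * (p div M mod 2) + p mod M"
    using mod_mult2_eq[of p M 2] by (simp add: mult.commute)
  then show ?thesis
    using assms by (cases "even (p div M)") (simp_all add: odd_iff_mod_2_eq_one even_iff_mod_2_eq_zero)
qed

text \<open>The letter at position p of any power of 1_{M,a} 2_{M,a} (with b = c a): the parity of the
  long block p div M selects 1_{M,a} or 2_{M,a}, and p mod (a + b) selects the run of length a
  or of length b inside it.\<close>

definition two_scale_letter :: "nat \<Rightarrow> nat \<Rightarrow> nat \<Rightarrow> nat \<Rightarrow> nat" where
  "two_scale_letter M a b p = (if even (p div M) \<longleftrightarrow> p mod (a + b) < a then 1 else 2)"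

lemma length_blk1: "(a + b) dvd M \<Longrightarrow> length (blk1 M a b) = M"
  by (simp add: blk1_def length_concat_replicate)

lemma length_blk2: "(a + b) dvd M \<Longrightarrow> length (blk2 M a b) = M"
  by (simp add: blk2_def length_concat_replicate)

lemma nth_blk1:
  assumes "0 < a + b" "(a + b) dvd M" "r < M"
  shows "blk1 M a b ! r = (if r mod (a + b) < a then 1 else 2)"
proof -
  have "blk1 M a b ! r = (replicate a 1 @ replicate b 2) ! (r mod (a + b))"
    unfolding blk1_def using assms by (subst nth_concat_replicate) auto
  then show ?thesis using mod_less_divisor[OF assms(1), of r] by (auto simp: nth_append)
qed

lemma nth_blk2:
  assumes "0 < a + b" "(a + b) dvd M" "r < M"
  shows "blk2 M a b ! r = (if r mod (a + b) < a then 2 else 1)"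
proof -
  have "blk2 M a b ! r = (replicate a 2 @ replicate b 1) ! (r mod (a + b))"
    unfolding blk2_def using assms by (subst nth_concat_replicate) auto
  then show ?thesis using mod_less_divisor[OF assms(1), of r] by (auto simp: nth_append)
qed

lemma nth_two_scale_power:
  assumes "0 < a + b" "(a + b) dvd M" "p < n * (2 * M)"
  shows "concat (replicate n (blk1 M a b @ blk2 M a b)) ! p = two_scale_letter M a b p"
proof -
  define r where "r = p mod (2 * M)"
  have M_pos: "0 < M" using assms by (cases "M = 0") auto
  have "(a + b) dvd 2 * M" using assms(2) by simp
  then have r_mod: "r mod (a + b) = p mod (a + b)"
    unfolding r_def by (rule mod_mod_cancel)
  have "concat (replicate n (blk1 M a b @ blk2 M a b)) ! p = (blk1 M a b @ blk2 M a b) ! r"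
    using assms by (subst nth_concat_replicate) (simp_all add: r_def length_blk1 length_blk2 mult_2)
  also have "\<dots> = two_scale_letter M a b p"
  proof (cases "r < M")
    case True
    then show ?thesis
      using assms r_mod mod_double_less_iff_even_div[OF M_pos, of p]
      by (simp add: nth_append length_blk1 nth_blk1 two_scale_letter_def r_def)
  next
    case False
    have "r < 2 * M" using M_pos by (simp add: r_def)
    moreover have "(r - M) mod (a + b) = r mod (a + b)"
    proof -
      obtain k where "M = (a + b) * k" using assms(2) by auto
      then show ?thesis using False by (metis add.commute le_add_diff_inverse not_less mod_mult_self2)
    qed
    ultimately show ?thesis
      using False assms r_mod mod_double_less_iff_even_div[OF M_pos, of p]
      by (simp add: nth_append length_blk1 nth_blk2 two_scale_letter_def r_def)
  qed
  finally show ?thesis .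
qed

lemma two_scale_letter_shift:
  assumes "0 < M" "(a + b) dvd M"
  shows "two_scale_letter M a b (p + M) \<noteq> two_scale_letter M a b p"
proof -
  have "(p + M) mod (a + b) = p mod (a + b)" using assms(2) by (auto elim!: dvdE)
  moreover have "(p + M) div M = Suc (p div M)" using assms(1) by simp
  ultimately show ?thesis by (simp add: two_scale_letter_def)
qed

text \<open>Index of the maximal run of (1^a 2^(m-a))^\<infinity> containing position p.\<close>

definition run_index :: "nat \<Rightarrow> nat \<Rightarrow> nat \<Rightarrow> nat" where
  "run_index m a p = 2 * (p div m) + (if p mod m < a then 0 else 1)"

lemma run_index_mono:
  assumes "0 < m" "p \<le> p'"
  shows "run_index m a p \<le> run_index m a p'"
proof (cases "p div m = p' div m")
  case True
  then have "p mod m \<le> p' mod m"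
    using assms div_mult_mod_eq[of p m] div_mult_mod_eq[of p' m] by (metis add_le_cancel_left)
  then show ?thesis using True by (auto simp: run_index_def)
next
  case False
  then have "p div m < p' div m" using div_le_mono[OF assms(2), of m] by simp
  then show ?thesis by (auto simp: run_index_def)
qed

lemma run_index_less:
  assumes "0 < m" "p < n * m"
  shows "run_index m a p < 2 * n"
proof -
  have "p div m < n" using assms by (simp add: div_less_iff_less_mult)
  then show ?thesis by (simp add: run_index_def)
qed

lemma two_scale_letter_eq_if_same_run:
  assumes "(a + b) dvd M" "run_index (a + b) a p = run_index (a + b) a p'"
  shows "two_scale_letter M a b p = two_scale_letter M a b p'"
proof -
  have "run_index (a + b) a q div 2 = q div (a + b)"
    and "even (run_index (a + b) a q) \<longleftrightarrow> q mod (a + b) < a" for q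
    by (simp_all add: run_index_def)
  then have "p div (a + b) = p' div (a + b)" "p mod (a + b) < a \<longleftrightarrow> p' mod (a + b) < a"
    using assms(2) by metis+
  moreover obtain k where "M = (a + b) * k" using assms(1) by auto
  ultimately have "p div M = p' div M" by (simp add: div_mult2_eq)
  with \<open>p mod (a + b) < a \<longleftrightarrow> p' mod (a + b) < a\<close> show ?thesis
    by (simp add: two_scale_letter_def)
qed

fun key_changes :: "('a \<Rightarrow> 'k) \<Rightarrow> 'a list \<Rightarrow> nat" where
  "key_changes key (x # y # xs) = (if key x = key y then 0 else 1) + key_changes key (y # xs)"
| "key_changes key _ = 0"

text \<open>A list splits into 1 + key_changes key xs maximal segments of constant key; bounds of the
  weight of each segment by its span plus e add up, since consecutive segments occupy disjoint
  position ranges. The accumulator acc holds the already traversed part of the current segment.\<close>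

lemma sum_list_le_span_by_segments_aux:
  fixes pos :: "'a \<Rightarrow> nat" and wt :: "'a \<Rightarrow> real"
  assumes segment: "\<And>zs. zs \<noteq> [] \<Longrightarrow> set zs \<subseteq> U \<Longrightarrow> sorted_wrt (\<lambda>a b. pos a < pos b) zs \<Longrightarrow>
      \<forall>z\<in>set zs. key z = key (hd zs) \<Longrightarrow>
      sum_list (map wt zs) \<le> real (pos (last zs)) - real (pos (hd zs)) + 1 + e"
  shows "xs \<noteq> [] \<Longrightarrow> sorted_wrt (\<lambda>a b. pos a < pos b) (acc @ xs) \<Longrightarrow> set (acc @ xs) \<subseteq> U \<Longrightarrow>
      \<forall>z\<in>set acc. key z = key (hd xs) \<Longrightarrow>
      sum_list (map wt (acc @ xs))
        \<le> real (pos (last xs)) - real (pos (hd (acc @ xs))) + 1 + e * (1 + key_changes key xs)"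
proof (induction xs arbitrary: acc rule: induct_list012)
  case (2 x)
  have "key (hd (acc @ [x])) = key x" using "2.prems"(4) by (cases acc) auto
  then have "sum_list (map wt (acc @ [x]))
      \<le> real (pos (last (acc @ [x]))) - real (pos (hd (acc @ [x]))) + 1 + e"
    using "2.prems" by (intro segment) auto
  then show ?case by simp
next
  case (3 x y xs)
  have sorted: "sorted_wrt (\<lambda>a b. pos a < pos b) ((acc @ [x]) @ y # xs)"
    using "3.prems"(2) by simp
  have acc_key: "\<forall>z\<in>set acc. key z = key x" using "3.prems"(4) by simp
  show ?case
  proof (cases "key x = key y")
    case True
    then have "sum_list (map wt ((acc @ [x]) @ y # xs)) \<le> real (pos (last (y # xs)))
        - real (pos (hd ((acc @ [x]) @ y # xs))) + 1 + e * (1 + key_changes key (y # xs))"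
      using sorted "3.prems"(3) acc_key by (intro "3.IH"(2)) auto
    then show ?thesis using True by simp
  next
    case False
    have "key (hd (acc @ [x])) = key x" using acc_key by (cases acc) auto
    then have "sum_list (map wt (acc @ [x]))
        \<le> real (pos (last (acc @ [x]))) - real (pos (hd (acc @ [x]))) + 1 + e"
      using sorted "3.prems"(3) acc_key by (intro segment) (auto simp: sorted_wrt_append)
    then have first: "sum_list (map wt (acc @ [x]))
        \<le> real (pos x) - real (pos (hd (acc @ [x]))) + 1 + e"
      by simp
    have rest: "sum_list (map wt ([] @ y # xs)) \<le> real (pos (last (y # xs)))
        - real (pos (hd ([] @ y # xs))) + 1 + e * (1 + key_changes key (y # xs))"
      using sorted "3.prems"(3) by (intro "3.IH"(2)) (auto simp: sorted_wrt_append)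
    have "pos x < pos y" using sorted by (simp add: sorted_wrt_append)
    moreover have "hd (acc @ x # y # xs) = hd (acc @ [x])" by (cases acc) auto
    ultimately show ?thesis using first rest False by (simp add: algebra_simps)
  qed
qed simp

lemma sum_list_le_span_by_segments:
  fixes pos :: "'a \<Rightarrow> nat" and wt :: "'a \<Rightarrow> real"
  assumes "xs \<noteq> []" "sorted_wrt (\<lambda>a b. pos a < pos b) xs"
    and "\<And>zs. zs \<noteq> [] \<Longrightarrow> set zs \<subseteq> set xs \<Longrightarrow> sorted_wrt (\<lambda>a b. pos a < pos b) zs \<Longrightarrow>
      \<forall>z\<in>set zs. key z = key (hd zs) \<Longrightarrow>
      sum_list (map wt zs) \<le> real (pos (last zs)) - real (pos (hd zs)) + 1 + e"
  shows "sum_list (map wt xs)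
    \<le> real (pos (last xs)) - real (pos (hd xs)) + 1 + e * (1 + key_changes key xs)"
proof -
  note aux = sum_list_le_span_by_segments_aux[where U = "set xs" and pos = pos and key = key
      and wt = wt and e = e and xs = xs and acc = "[]"]
  have p1: "sorted_wrt (\<lambda>a b. pos a < pos b) ([] @ xs)" using assms(2) by simp
  have p2: "set ([] @ xs) \<subseteq> set xs" by simp
  have p3: "\<forall>z\<in>set []. key z = key (hd xs)" by simp
  have "sum_list (map wt ([] @ xs))
      \<le> real (pos (last xs)) - real (pos (hd ([] @ xs))) + 1 + e * (1 + key_changes key xs)"
    by (rule aux[OF assms(3) assms(1) p1 p2 p3])
  then show ?thesis by simp
qed

lemma key_changes_le:
  fixes F :: "'a \<Rightarrow> nat"
  assumes "sorted_wrt (\<lambda>a b. F a \<le> F b \<and> (key a \<noteq> key b \<longrightarrow> F a < F b)) xs" "xs \<noteq> []"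
  shows "key_changes key xs + F (hd xs) \<le> F (last xs)"
  using assms
proof (induction xs rule: induct_list012)
  case (3 x y xs)
  then have "key_changes key (y # xs) + F y \<le> F (last (y # xs))" by simp
  moreover have "F x \<le> F y \<and> (key x \<noteq> key y \<longrightarrow> F x < F y)" using "3.prems"(1) by simp
  ultimately show ?case by auto
qed simp_all

lemma mod_eq_imp_eq_if_close:
  fixes x y m :: nat
  assumes "x mod m = y mod m" "x \<le> y" "y < x + m"
  shows "x = y"
proof (rule ccontr)
  assume "x \<noteq> y"
  then have "0 < y - x" "y - x < m" using assms(2,3) by auto
  moreover have "m dvd y - x" using assms(1,2) mod_eq_dvd_iff_nat[of x y m] by simp
  ultimately show False using dvd_imp_le by fastforce
qed

lemma card_interval_residues_le:
  fixes m u l :: nat and A :: "nat set"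
  assumes m: "0 < m" and A: "A \<subseteq> {..<m}"
  shows "m * card {q\<in>{u..<u+l}. q mod m \<in> A} \<le> card A * (l + m - card A)"
proof (induction l rule: less_induct)
  case (less l)
  define k where "k = card A"
  have k_le: "k \<le> m" using card_mono[OF finite_lessThan A] by (simp add: k_def)
  have short: "card {q\<in>{u'..<u'+l'}. q mod m \<in> A} \<le> k" if "l' \<le> m" for l' u'
  proof -
    have "inj_on (\<lambda>q. q mod m) {q\<in>{u'..<u'+l'}. q mod m \<in> A}"
    proof (rule inj_onI)
      fix x y
      assume "x \<in> {q\<in>{u'..<u'+l'}. q mod m \<in> A}" "y \<in> {q\<in>{u'..<u'+l'}. q mod m \<in> A}"
        and "x mod m = y mod m"
      then show "x = y"
        using that mod_eq_imp_eq_if_close[of x m y] mod_eq_imp_eq_if_close[of y m x]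
        by (cases "x \<le> y") auto
    qed
    then have "card {q\<in>{u'..<u'+l'}. q mod m \<in> A}
        = card ((\<lambda>q. q mod m) ` {q\<in>{u'..<u'+l'}. q mod m \<in> A})"
      by (simp add: card_image)
    also have "\<dots> \<le> card A"
      using A by (intro card_mono) (auto intro: finite_subset)
    finally show ?thesis by (simp add: k_def)
  qed
  show ?case
  proof (cases "l \<le> m")
    case True
    have "card {q\<in>{u..<u+l}. q mod m \<in> A} \<le> min l k"
      using short[OF True] card_mono[of "{u..<u+l}" "{q\<in>{u..<u+l}. q mod m \<in> A}"] by force
    then have "m * card {q\<in>{u..<u+l}. q mod m \<in> A} \<le> m * min l k" by simp
    also have "\<dots> \<le> k * (l + m - k)"
    proof (cases "l \<le> k")
      case True
      have "m * l = k * l + (m - k) * l" using k_le by (simp add: algebra_simps)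
      also have "\<dots> \<le> k * l + (m - k) * k" using True by simp
      also have "\<dots> = k * (l + m - k)" using k_le by (simp add: algebra_simps)
      finally show ?thesis using True by (simp add: min_def)
    next
      case False
      then have "m \<le> l + m - k" by simp
      then show ?thesis using False by (simp add: min_def mult.commute)
    qed
    finally show ?thesis by (simp add: k_def)
  next
    case False
    define l' where "l' = l - m"
    have l: "l = l' + m" using False by (simp add: l'_def)
    have "{q\<in>{u..<u+l}. q mod m \<in> A}
        = {q\<in>{u..<u+l'}. q mod m \<in> A} \<union> {q\<in>{u+l'..<(u+l')+m}. q mod m \<in> A}"
      using l by auto
    then have "card {q\<in>{u..<u+l}. q mod m \<in> A}
        \<le> card {q\<in>{u..<u+l'}. q mod m \<in> A} + card {q\<in>{u+l'..<(u+l')+m}. q mod m \<in> A}"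
      by (simp add: card_Un_le)
    also have "\<dots> \<le> card {q\<in>{u..<u+l'}. q mod m \<in> A} + k" using short[of m "u + l'"] by simp
    finally have "m * card {q\<in>{u..<u+l}. q mod m \<in> A}
        \<le> m * card {q\<in>{u..<u+l'}. q mod m \<in> A} + m * k"
      by (simp add: distrib_left[symmetric])
    also have "\<dots> \<le> k * (l' + m - k) + m * k" using less.IH[of l'] l m by (simp add: k_def)
    also have "\<dots> = k * (l + m - k)"
    proof -
      have "l + m - k = (l' + m - k) + m" using l k_le by simp
      then show ?thesis by (simp add: distrib_left mult.commute)
    qed
    finally show ?thesis by (simp add: k_def)
  qed
qed

lemma card_residues_in_window_le:
  fixes m :: nat
  assumes "0 < m" "A \<subseteq> {..<m}" "T \<subseteq> {u..v}" "\<forall>q\<in>T. q mod m \<in> A"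
  shows "m * card T \<le> card A * (Suc v - u + m - card A)"
proof -
  have "T \<subseteq> {q\<in>{u..<u + (Suc v - u)}. q mod m \<in> A}" using assms(3,4) by auto
  then have "card T \<le> card {q\<in>{u..<u + (Suc v - u)}. q mod m \<in> A}"
    by (intro card_mono) auto
  then have "m * card T \<le> m * card {q\<in>{u..<u + (Suc v - u)}. q mod m \<in> A}" by simp
  also have "\<dots> \<le> card A * (Suc v - u + m - card A)"
    by (rule card_interval_residues_le[OF assms(1,2)])
  finally show ?thesis .
qed

lemma card_same_letter_window:
  assumes "0 < M" "(a + b) dvd M" "S \<subseteq> {u..v}" "\<forall>p\<in>S. two_scale_letter M a b p = x"
  shows "2 * card S \<le> Suc v - u + M"
proof -
  have fin: "finite S" using assms(3) finite_subset by blast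
  have "S \<inter> (\<lambda>p. p + M) ` S = {}"
  proof -
    have False if "p \<in> S" "p + M \<in> S" for p
      using that assms(4) two_scale_letter_shift[OF assms(1,2), of p] by simp
    then show ?thesis by blast
  qed
  then have "2 * card S = card (S \<union> (\<lambda>p. p + M) ` S)"
    using fin by (simp add: card_Un_disjoint card_image)
  also have "\<dots> \<le> card {u..v + M}"
    using assms(3) by (intro card_mono) auto
  finally show ?thesis by simp
qed

lemma card_long_run_window:
  fixes c :: real
  assumes "0 < a" "real b = c * real a" "T \<subseteq> {u..v}" "\<forall>q\<in>T. q mod (a + b) < a"
  shows "(1 + c) * card T \<le> real (Suc v - u) + real b"
proof -
  have "(a + b) * card T \<le> card {..<a} * (Suc v - u + (a + b) - card {..<a})"
    using assms(1,3,4) by (intro card_residues_in_window_le) auto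
  then have "(a + b) * card T \<le> a * (Suc v - u + b)" by simp
  then have "(real a + real b) * card T \<le> real a * (real (Suc v - u) + real b)"
    by (simp only: of_nat_add[symmetric] of_nat_mult[symmetric] of_nat_le_iff)
  then have "real a * ((1 + c) * card T) \<le> real a * (real (Suc v - u) + real b)"
    using assms(2) by (simp add: algebra_simps)
  then show ?thesis using assms(1) by simp
qed

lemma card_short_run_window:
  fixes c :: real
  assumes "0 < a" "0 \<le> c" "c * (3 + c) \<le> 1 + c" "real b = c * real a"
    and "T \<subseteq> {u..v}" "\<forall>q\<in>T. \<not> q mod (a + b) < a"
  shows "(3 + c) * card T \<le> real (Suc v - u) + real a"
proof (cases "c = 0")
  case True
  then have "b = 0" using assms(4) by simp
  then have "T = {}" using assms(1,6) by auto
  then show ?thesis by simp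
next
  case False
  have "T \<subseteq> {q. q mod (a + b) \<in> {a..<a + b}}" using assms(1,6) by auto
  then have "(a + b) * card T \<le> card {a..<a + b} * (Suc v - u + (a + b) - card {a..<a + b})"
    using assms(1,5) by (intro card_residues_in_window_le) auto
  then have "(a + b) * card T \<le> b * (Suc v - u + a)" by simp
  then have "(real a + real b) * card T \<le> real b * (real (Suc v - u) + real a)"
    by (simp only: of_nat_add[symmetric] of_nat_mult[symmetric] of_nat_le_iff)
  then have "real a * ((1 + c) * card T) \<le> real a * (c * (real (Suc v - u) + real a))"
    using assms(4) by (simp add: algebra_simps)
  then have "(1 + c) * card T \<le> c * (real (Suc v - u) + real a)" using assms(1) by simp
  moreover have "c * ((3 + c) * card T) \<le> (1 + c) * card T"
    using assms(3) by (simp add: mult.assoc[symmetric] mult_right_mono)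
  ultimately have "c * ((3 + c) * card T) \<le> c * (real (Suc v - u) + real a)" by linarith
  then show ?thesis using False assms(2) by (simp add: mult_le_cancel_left_pos)
qed

lemma sorted_wrt_image_subset_hd_last:
  fixes pos :: "'a \<Rightarrow> 'b :: linorder"
  assumes "sorted_wrt (\<lambda>a b. pos a < pos b) zs" "zs \<noteq> []"
  shows "pos ` set zs \<subseteq> {pos (hd zs)..pos (last zs)}"
  using assms
proof (induction zs)
  case (Cons x zs)
  show ?case
  proof (cases "zs = []")
    case False
    have x_less: "\<forall>z\<in>set zs. pos x < pos z" using Cons.prems(1) by simp
    have "pos ` set zs \<subseteq> {pos (hd zs)..pos (last zs)}" using Cons False by simp
    moreover have "pos x \<le> pos (last zs)" using x_less False by (simp add: less_imp_le)
    ultimately show ?thesis using x_less False by (auto simp: less_imp_le)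
  qed simp
qed simp

lemma card_image_sorted_wrt:
  fixes pos :: "'a \<Rightarrow> 'b :: linorder"
  assumes "sorted_wrt (\<lambda>a b. pos a < pos b) zs"
  shows "card (pos ` set zs) = length zs"
proof -
  have "sorted_wrt (<) (map pos zs)" using assms by (simp add: sorted_wrt_map)
  then have "distinct (map pos zs)" by (simp add: strict_sorted_iff)
  then show ?thesis using distinct_card[of "map pos zs"] by simp
qed

lemma real_span_pos_map:
  fixes f :: "'a \<Rightarrow> nat"
  assumes "sorted_wrt (\<lambda>a b. f a < f b) zs" "zs \<noteq> []"
  shows "real (span_pos (map f zs)) = real (f (last zs)) - real (f (hd zs)) + 1"
proof -
  have "f (hd zs) \<le> f (last zs)"
    using sorted_wrt_image_subset_hd_last[OF assms] hd_in_set[OF assms(2)] by auto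
  then show ?thesis using assms(2) by (simp add: span_pos_def hd_map last_map of_nat_diff)
qed

lemma of_nat_Suc_diff_eq:
  fixes u v :: nat
  shows "u \<le> v \<Longrightarrow> real (Suc v - u) = real v - real u + 1"
  by (simp add: of_nat_diff)

locale two_scale_parameters =
  fixes c :: real and aI bI MI aJ bJ MJ L R :: nat
  assumes c_nonneg: "0 \<le> c" and c_small: "c * (3 + c) \<le> 1 + c"
    and bJ_eq: "real bJ = c * real aJ"
    and aI_pos: "0 < aI" and aJ_pos: "0 < aJ" and MI_pos: "0 < MI" and MJ_pos: "0 < MJ"
    and period_dvd_MI: "(aI + bI) dvd MI"
    and MI_dvd_L: "MI dvd L" and MJ_dvd_L: "MJ dvd L"
    and R_pos: "0 < R" and R_aJ_le_aI: "R * aJ \<le> aI" and R_aJ_le_MJ: "R * aJ \<le> MJ"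
    and R_MI_le_MJ: "R * MI \<le> MJ"

text \<open>xs lists the matched position pairs of a common subsequence of a word with letters
  two_scale_letter MI aI bI (playing g_i) and a word with letters two_scale_letter MJ aJ bJ
  (playing g_j).\<close>

locale two_scale_matching = two_scale_parameters +
  fixes xs :: "(nat \<times> nat) list"
  assumes xs_nonempty: "xs \<noteq> []"
    and xs_sorted: "sorted_wrt (\<lambda>z z'. fst z < fst z' \<and> snd z < snd z') xs"
    and xs_bounded: "\<forall>z\<in>set xs. fst z < 2 * L \<and> snd z < 2 * L"
    and xs_letters: "\<forall>z\<in>set xs. two_scale_letter MI aI bI (fst z) = two_scale_letter MJ aJ bJ (snd z)"
begin

definition in_long_run :: "nat \<times> nat \<Rightarrow> bool" where
  "in_long_run z \<longleftrightarrow> snd z mod (aJ + bJ) < aJ"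

definition weight_I :: "nat \<times> nat \<Rightarrow> real" where
  "weight_I z = (if in_long_run z then 2 else 0)"

definition weight_J :: "nat \<times> nat \<Rightarrow> real" where
  "weight_J z = (if in_long_run z then 1 + c else 3 + c)"

lemma c_le_1: "c \<le> 1"
proof -
  have "3 * c \<le> c * (3 + c)" using c_nonneg by (simp add: algebra_simps)
  then show ?thesis using c_small by linarith
qed

lemma weight_J_segment:
  assumes "zs \<noteq> []" "sorted_wrt (\<lambda>a b. snd a < snd b) zs"
    and "\<forall>z\<in>set zs. in_long_run z = in_long_run (hd zs)"
  shows "sum_list (map weight_J zs) \<le> real (snd (last zs)) - real (snd (hd zs)) + 1 + real aJ"
proof -
  define T where "T = snd ` set zs"
  have T_sub: "T \<subseteq> {snd (hd zs)..snd (last zs)}"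
    unfolding T_def by (rule sorted_wrt_image_subset_hd_last[OF assms(2,1)])
  have card_T: "card T = length zs" unfolding T_def by (rule card_image_sorted_wrt[OF assms(2)])
  have span: "real (Suc (snd (last zs)) - snd (hd zs)) = real (snd (last zs)) - real (snd (hd zs)) + 1"
    using T_sub hd_in_set[OF assms(1)] by (intro of_nat_Suc_diff_eq) (auto simp: T_def)
  show ?thesis
  proof (cases "in_long_run (hd zs)")
    case True
    then have "sum_list (map weight_J zs) = real (length zs) * (1 + c)"
      using assms(3) by (simp add: weight_J_def sum_list_triv cong: map_cong)
    moreover have "(1 + c) * card T \<le> real (Suc (snd (last zs)) - snd (hd zs)) + real bJ"
      using assms(3) True by (intro card_long_run_window[OF aJ_pos bJ_eq T_sub])
        (auto simp: T_def in_long_run_def)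
    moreover have "real bJ \<le> real aJ"
      using bJ_eq c_le_1 mult_right_mono[OF c_le_1, of "real aJ"] by simp
    ultimately show ?thesis using card_T span by (simp add: mult.commute)
  next
    case False
    then have "sum_list (map weight_J zs) = real (length zs) * (3 + c)"
      using assms(3) by (simp add: weight_J_def sum_list_triv cong: map_cong)
    moreover have "(3 + c) * card T \<le> real (Suc (snd (last zs)) - snd (hd zs)) + real aJ"
      using assms(3) False
      by (intro card_short_run_window[OF aJ_pos c_nonneg c_small bJ_eq T_sub])
        (auto simp: T_def in_long_run_def)
    ultimately show ?thesis using card_T span by (simp add: mult.commute)
  qed
qed

lemma weight_I_segment:
  assumes "zs \<noteq> []" "set zs \<subseteq> set xs" "sorted_wrt (\<lambda>a b. fst a < fst b) zs"
    and "\<forall>z\<in>set zs. snd z div MJ = snd (hd zs) div MJ"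
  shows "sum_list (map weight_I zs) \<le> real (fst (last zs)) - real (fst (hd zs)) + 1 + real MI"
proof -
  define S where "S = fst ` set (filter in_long_run zs)"
  have S_sub: "S \<subseteq> {fst (hd zs)..fst (last zs)}"
    using sorted_wrt_image_subset_hd_last[OF assms(3,1)] by (auto simp: S_def)
  have card_S: "card S = length (filter in_long_run zs)"
    unfolding S_def by (rule card_image_sorted_wrt[OF sorted_wrt_filter[OF assms(3)]])
  have span: "real (Suc (fst (last zs)) - fst (hd zs)) = real (fst (last zs)) - real (fst (hd zs)) + 1"
    using sorted_wrt_image_subset_hd_last[OF assms(3,1)] hd_in_set[OF assms(1)]
    by (intro of_nat_Suc_diff_eq) auto
  \<comment> \<open>Long-run positions of g_j within one block of length MJ all carry the same letter.\<close>
  define x where "x = (if even (snd (hd zs) div MJ) then 1 else (2::nat))"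
  have "\<forall>p\<in>S. two_scale_letter MI aI bI p = x"
  proof
    fix p assume "p \<in> S"
    then obtain z where z: "z \<in> set zs" "in_long_run z" "p = fst z" by (auto simp: S_def)
    then have "two_scale_letter MI aI bI p = two_scale_letter MJ aJ bJ (snd z)"
      using xs_letters assms(2) by blast
    moreover have "snd z div MJ = snd (hd zs) div MJ" using assms(4) z(1) by blast
    ultimately show "two_scale_letter MI aI bI p = x"
      using z(2) by (simp add: x_def two_scale_letter_def in_long_run_def)
  qed
  then have "2 * card S \<le> Suc (fst (last zs)) - fst (hd zs) + MI"
    by (rule card_same_letter_window[OF MI_pos period_dvd_MI S_sub])
  moreover have "sum_list (map weight_I zs) = sum_list (map (\<lambda>_. 2) (filter in_long_run zs))"
    unfolding sum_list_map_filter' weight_I_def by simp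
  ultimately show ?thesis
    using card_S span by (simp add: sum_list_triv flip: of_nat_le_iff)
qed

lemma mult_div_double_L:
  "(aI + bI) * (2 * L div (aI + bI)) = 2 * L" "MJ * (2 * L div MJ) = 2 * L"
  using dvd_trans[OF period_dvd_MI MI_dvd_L] MJ_dvd_L by simp_all

lemma block_J_less:
  "z \<in> set xs \<Longrightarrow> snd z div MJ < 2 * L div MJ"
  using xs_bounded mult_div_double_L(2) MJ_pos by (simp add: div_less_iff_less_mult mult.commute)

lemma in_long_run_eq_if_same_run_and_block:
  assumes "a \<in> set xs" "b \<in> set xs"
    and "run_index (aI + bI) aI (fst a) = run_index (aI + bI) aI (fst b)"
    and "snd a div MJ = snd b div MJ"
  shows "in_long_run a = in_long_run b"
proof -
  have "two_scale_letter MI aI bI (fst a) = two_scale_letter MI aI bI (fst b)"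
    by (rule two_scale_letter_eq_if_same_run[OF period_dvd_MI assms(3)])
  then have "two_scale_letter MJ aJ bJ (snd a) = two_scale_letter MJ aJ bJ (snd b)"
    using xs_letters assms(1,2) by metis
  then show ?thesis using assms(4) by (simp add: two_scale_letter_def in_long_run_def split: if_splits)
qed

text \<open>The run of g_i containing fst z and the block of g_j containing snd z only move forward
  along xs, and in_long_run z can only change when one of them moves.\<close>

lemma key_changes_in_long_run:
  "R * (aJ * (1 + key_changes in_long_run xs)) \<le> 6 * L"
proof -
  define F where "F z = run_index (aI + bI) aI (fst z) + snd z div MJ" for z
  have "sorted_wrt (\<lambda>a b. F a \<le> F b \<and> (in_long_run a \<noteq> in_long_run b \<longrightarrow> F a < F b)) xs"
  proof (rule sorted_wrt_mono_rel[OF _ xs_sorted])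
    fix a b assume ab: "a \<in> set xs" "b \<in> set xs" "fst a < fst b \<and> snd a < snd b"
    have "run_index (aI + bI) aI (fst a) \<le> run_index (aI + bI) aI (fst b)"
      using ab(3) aI_pos by (intro run_index_mono) auto
    moreover have "snd a div MJ \<le> snd b div MJ" using ab(3) by (simp add: div_le_mono)
    ultimately show "F a \<le> F b \<and> (in_long_run a \<noteq> in_long_run b \<longrightarrow> F a < F b)"
      using in_long_run_eq_if_same_run_and_block[OF ab(1,2)] unfolding F_def by fastforce
  qed
  then have "key_changes in_long_run xs + F (hd xs) \<le> F (last xs)"
    by (rule key_changes_le[OF _ xs_nonempty])
  moreover have "run_index (aI + bI) aI (fst (last xs)) < 2 * (2 * L div (aI + bI))"
    using xs_bounded last_in_set[OF xs_nonempty] mult_div_double_L(1) aI_pos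
    by (intro run_index_less) (auto simp: mult.commute)
  moreover have "snd (last xs) div MJ < 2 * L div MJ"
    by (rule block_J_less[OF last_in_set[OF xs_nonempty]])
  ultimately have "1 + key_changes in_long_run xs \<le> 2 * (2 * L div (aI + bI)) + 2 * L div MJ"
    unfolding F_def by linarith
  then have "R * aJ * (1 + key_changes in_long_run xs)
      \<le> R * aJ * (2 * (2 * L div (aI + bI)) + 2 * L div MJ)"
    by (rule mult_le_mono2)
  then have "R * (aJ * (1 + key_changes in_long_run xs))
      \<le> 2 * (R * aJ * (2 * L div (aI + bI))) + R * aJ * (2 * L div MJ)"
    by (simp add: algebra_simps)
  also have "\<dots> \<le> 2 * ((aI + bI) * (2 * L div (aI + bI))) + MJ * (2 * L div MJ)"
    using R_aJ_le_aI R_aJ_le_MJ by (intro add_mono mult_le_mono) auto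
  finally show ?thesis using mult_div_double_L by simp
qed

lemma key_changes_block_J:
  "R * (MI * (1 + key_changes (\<lambda>z. snd z div MJ) xs)) \<le> 2 * L"
proof -
  have "sorted_wrt (\<lambda>a b. snd a div MJ \<le> snd b div MJ
      \<and> (snd a div MJ \<noteq> snd b div MJ \<longrightarrow> snd a div MJ < snd b div MJ)) xs"
    by (rule sorted_wrt_mono_rel[OF _ xs_sorted]) (auto simp: div_le_mono le_neq_implies_less)
  then have "key_changes (\<lambda>z. snd z div MJ) xs + snd (hd xs) div MJ \<le> snd (last xs) div MJ"
    by (rule key_changes_le[OF _ xs_nonempty])
  then have "1 + key_changes (\<lambda>z. snd z div MJ) xs \<le> 2 * L div MJ"
    using block_J_less[OF last_in_set[OF xs_nonempty]] by linarith
  then have "R * MI * (1 + key_changes (\<lambda>z. snd z div MJ) xs) \<le> R * MI * (2 * L div MJ)"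
    by (rule mult_le_mono2)
  also have "\<dots> \<le> MJ * (2 * L div MJ)" using R_MI_le_MJ by simp
  finally show ?thesis using mult_div_double_L by (simp add: algebra_simps)
qed

lemma weight_J_le:
  "sum_list (map weight_J xs) \<le> real (snd (last xs)) - real (snd (hd xs)) + 1 + 6 * real L / real R"
proof -
  have "sorted_wrt (\<lambda>a b. snd a < snd b) xs" by (rule sorted_wrt_mono_rel[OF _ xs_sorted]) auto
  then have "sum_list (map weight_J xs)
      \<le> real (snd (last xs)) - real (snd (hd xs)) + 1 + real aJ * (1 + key_changes in_long_run xs)"
    by (rule sum_list_le_span_by_segments[OF xs_nonempty]) (rule weight_J_segment)
  moreover have "real R * (real aJ * (1 + key_changes in_long_run xs)) \<le> 6 * real L"
    using key_changes_in_long_run by (metis of_nat_le_iff of_nat_mult of_nat_numeral)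
  then have "real aJ * (1 + key_changes in_long_run xs) \<le> 6 * real L / real R"
    using R_pos by (simp add: pos_le_divide_eq mult.commute)
  ultimately show ?thesis by linarith
qed

lemma weight_I_le:
  "sum_list (map weight_I xs) \<le> real (fst (last xs)) - real (fst (hd xs)) + 1 + 2 * real L / real R"
proof -
  have "sorted_wrt (\<lambda>a b. fst a < fst b) xs" by (rule sorted_wrt_mono_rel[OF _ xs_sorted]) auto
  then have "sum_list (map weight_I xs) \<le> real (fst (last xs)) - real (fst (hd xs)) + 1
      + real MI * (1 + key_changes (\<lambda>z. snd z div MJ) xs)"
    by (rule sum_list_le_span_by_segments[OF xs_nonempty]) (rule weight_I_segment)
  moreover have "real R * (real MI * (1 + key_changes (\<lambda>z. snd z div MJ) xs)) \<le> 2 * real L"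
    using key_changes_block_J by (metis of_nat_le_iff of_nat_mult of_nat_numeral)
  then have "real MI * (1 + key_changes (\<lambda>z. snd z div MJ) xs) \<le> 2 * real L / real R"
    using R_pos by (simp add: pos_le_divide_eq mult.commute)
  ultimately show ?thesis by linarith
qed

theorem length_le_spans:
  "(3 + c) * real (length xs)
    \<le> real (span_pos (map fst xs)) + real (span_pos (map snd xs)) + 8 * real L / real R"
proof -
  have "sum_list (map weight_I xs) + sum_list (map weight_J xs)
      = sum_list (map (\<lambda>z. weight_I z + weight_J z) xs)"
    by (simp add: sum_list_addf)
  also have "map (\<lambda>z. weight_I z + weight_J z) xs = map (\<lambda>_. 3 + c) xs"
    by (simp add: weight_I_def weight_J_def)
  finally have "sum_list (map weight_I xs) + sum_list (map weight_J xs) = (3 + c) * real (length xs)"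
    by (simp add: sum_list_triv)
  moreover have "real (span_pos (map fst xs)) = real (fst (last xs)) - real (fst (hd xs)) + 1"
    by (rule real_span_pos_map[OF sorted_wrt_mono_rel[OF _ xs_sorted] xs_nonempty]) auto
  moreover have "real (span_pos (map snd xs)) = real (snd (last xs)) - real (snd (hd xs)) + 1"
    by (rule real_span_pos_map[OF sorted_wrt_mono_rel[OF _ xs_sorted] xs_nonempty]) auto
  ultimately show ?thesis using weight_I_le weight_J_le by (simp add: add_divide_distrib)
qed

end

context two_scale_parameters
begin

theorem common_subseq_length_le_spans:
  assumes "length u = 2 * L" "\<forall>p < 2 * L. u ! p = two_scale_letter MI aI bI p"
    and "length v = 2 * L" "\<forall>q < 2 * L. v ! q = two_scale_letter MJ aJ bJ q"
    and "common_subseq u v s"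
  shows "(3 + c) * real (cs_len s)
    \<le> real (span_pos (fst s)) + real (span_pos (snd s)) + 8 * real L / real R"
proof -
  obtain "is" js where s: "s = (is, js)" by (cases s)
  have cs: "sorted_wrt (<) is" "sorted_wrt (<) js" "length is = length js"
    "\<forall>p\<in>set is. p < 2 * L" "\<forall>q\<in>set js. q < 2 * L" "map ((!) u) is = map ((!) v) js"
    using assms unfolding common_subseq_def s by (simp_all add: Let_def)
  show ?thesis
  proof (cases "is = []")
    case True
    then show ?thesis using cs(3) by (simp add: s cs_len_def span_pos_def)
  next
    case False
    have "two_scale_matching c aI bI MI aJ bJ MJ L R (zip is js)"
    proof unfold_locales
      show "zip is js \<noteq> []" using False cs(3) by (cases js) auto
      show "sorted_wrt (\<lambda>z z'. fst z < fst z' \<and> snd z < snd z') (zip is js)"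
        using cs(1-3) by (auto simp: sorted_wrt_iff_nth_less)
      show "\<forall>z\<in>set (zip is js). fst z < 2 * L \<and> snd z < 2 * L"
        using cs(4,5) by (auto dest: set_zip_leftD set_zip_rightD)
      show "\<forall>z\<in>set (zip is js). two_scale_letter MI aI bI (fst z) = two_scale_letter MJ aJ bJ (snd z)"
      proof
        fix z assume "z \<in> set (zip is js)"
        then obtain k where k: "k < length is" "z = (is ! k, js ! k)" using cs(3) by (auto simp: set_zip)
        then have "u ! (is ! k) = v ! (js ! k)"
          using arg_cong[OF cs(6), of "\<lambda>ws. ws ! k"] cs(3) by simp
        moreover have "is ! k < 2 * L" "js ! k < 2 * L" using cs(3-5) k(1) by simp_all
        ultimately show "two_scale_letter MI aI bI (fst z) = two_scale_letter MJ aJ bJ (snd z)"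
          using assms(2,4) k(2) by simp
      qed
    qed
    then show ?thesis
      using two_scale_matching.length_le_spans cs(3) by (fastforce simp: s cs_len_def)
  qed
qed

end

lemma gword_two_scale:
  fixes c :: real and R K t l :: nat
  assumes "0 \<le> c" "real R = (1 + c) * real t" "0 < R" "l \<le> K" "c * real (R ^ (K - l)) \<in> \<int>"
  defines "a \<equiv> R ^ (K - l)" and "b \<equiv> nat \<lfloor>c * real (R ^ (K - l))\<rfloor>" and "M \<equiv> R ^ (K + 1 + l)"
  shows "real b = c * real a" and "(a + b) dvd M" and "M dvd R ^ (2 * K + 1)"
    and "length (gword c R K l) = 2 * R ^ (2 * K + 1)"
    and "\<forall>p < 2 * R ^ (2 * K + 1). gword c R K l ! p = two_scale_letter M a b p"
proof -
  obtain z where "c * real a = of_int z" using assms(5) unfolding a_def by (auto elim!: Ints_cases)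
  moreover have "0 \<le> c * real a" using assms(1) by simp
  ultimately show b: "real b = c * real a" by (simp add: a_def b_def)
  have "real M = real a * real R ^ (2 * l) * real R"
    using assms(4) by (simp add: M_def a_def flip: power_add power_Suc2) (simp add: algebra_simps)
  also have "\<dots> = (real a + real b) * (real R ^ (2 * l) * real t)"
    using assms(2) b by (simp add: algebra_simps)
  finally have "M = (a + b) * (R ^ (2 * l) * t)"
    by (simp only: of_nat_add[symmetric] of_nat_mult[symmetric] of_nat_power[symmetric] of_nat_eq_iff)
  then show dvd_M: "(a + b) dvd M" by simp
  have "R ^ (2 * K + 1) = M * a"
    using assms(4) by (simp add: M_def a_def mult_2 flip: power_add)
  then show M_dvd: "M dvd R ^ (2 * K + 1)" by simp
  have gword: "gword c R K l = concat (replicate (R ^ (2 * K + 1) div M) (blk1 M a b @ blk2 M a b))"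
    by (simp add: gword_def a_def b_def M_def Let_def)
  have n: "R ^ (2 * K + 1) div M * (2 * M) = 2 * R ^ (2 * K + 1)"
    using M_dvd by (simp add: mult.commute mult.left_commute)
  show "length (gword c R K l) = 2 * R ^ (2 * K + 1)"
    using dvd_M n by (simp add: gword length_concat_replicate length_blk1 length_blk2 mult_2)
  show "\<forall>p < 2 * R ^ (2 * K + 1). gword c R K l ! p = two_scale_letter M a b p"
    using assms(3) dvd_M n by (auto simp: gword a_def intro: nth_two_scale_power)
qed

lemma mult_power_le_power:
  fixes R :: nat
  assumes "1 \<le> R" "m < n"
  shows "R * R ^ m \<le> R ^ n"
  using power_increasing[OF Suc_leI[OF assms(2)] assms(1)] by simp

lemma c_small_if_less_sqrt2:
  fixes c :: real
  assumes "0 \<le> c" "c < sqrt 2 - 1"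
  shows "c * (3 + c) \<le> 1 + c"
proof -
  have "(c + 1) ^ 2 < sqrt 2 ^ 2" using assms by (intro power_strict_mono) auto
  then show ?thesis by (simp add: power2_eq_square algebra_simps)
qed

theorem lemma3p8:
  fixes c :: real and K t R L i j :: nat and s :: "nat list \<times> nat list"
  assumes "0 \<le> c" and "c < sqrt 2 - 1"
    and "K \<ge> 1" and "t > 0"
    and "real R = (1 + c) * real t" and "R \<ge> 10"
    and "L = R ^ (2 * K + 1)"
    and "1 \<le> i" and "i < j" and "j \<le> K"
    and "c * real (R ^ (K - i)) \<in> \<int>" and "c * real (R ^ (K - j)) \<in> \<int>"
    and "common_subseq (gword c R K i) (gword c R K j) s"
  shows "(1 + 2 / real R) * real (span_pos (fst s)) + real (span_pos (snd s))
           \<ge> (3 + c) * real (cs_len s) - 10 * real L / real R"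
proof -
  have R_pos: "0 < R" and R_ge_1: "1 \<le> R" using assms(6) by simp_all
  have "i \<le> K" and "j \<le> K" using assms(9,10) by simp_all
  note gI = gword_two_scale[OF assms(1,5) R_pos \<open>i \<le> K\<close> assms(11)]
  note gJ = gword_two_scale[OF assms(1,5) R_pos \<open>j \<le> K\<close> assms(12)]
  have scales: "R * R ^ (K - j) \<le> R ^ (K - i)" "R * R ^ (K - j) \<le> R ^ (K + 1 + j)"
    "R * R ^ (K + 1 + i) \<le> R ^ (K + 1 + j)"
    by (rule mult_power_le_power[OF R_ge_1], use assms(8-10) in linarith)+
  interpret two_scale_parameters c
      "R ^ (K - i)" "nat \<lfloor>c * real (R ^ (K - i))\<rfloor>" "R ^ (K + 1 + i)"
      "R ^ (K - j)" "nat \<lfloor>c * real (R ^ (K - j))\<rfloor>" "R ^ (K + 1 + j)" L R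
    using assms(1,7-10) R_pos gI(2,3) gJ(1-3) scales c_small_if_less_sqrt2[OF assms(1,2)]
    by unfold_locales auto
  have "(3 + c) * real (cs_len s)
      \<le> real (span_pos (fst s)) + real (span_pos (snd s)) + 8 * real L / real R"
    using assms(7-10,13) gI(4,5) gJ(4,5) by (intro common_subseq_length_le_spans) auto
  moreover have "8 * real L / real R \<le> 10 * real L / real R"
    using R_pos by (simp add: divide_right_mono)
  moreover have "real (span_pos (fst s)) \<le> (1 + 2 / real R) * real (span_pos (fst s))"
    by (simp add: distrib_right)
  ultimately show ?thesis by linarith
qed

end
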